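(* Let $F$ be a lean multi-clause-set with $n(F) > 0$. Then $\mathrm{minvdeg}(F) \le \mathrm{N}(\sigma(F))$. More precisely, there exists a variable $v \in \mathrm{var}(F)$ with $\mathrm{vdeg}_F(v) \le \mathrm{N}(\sigma(F))$ and $\mathrm{ld}_F(v) \le \sigma(F)$, $\mathrm{ld}_F(\overline{v}) \le \sigma(F)$.
   Context: Literals come with a fixed-point-free involution $x \mapsto \overline{x}$; variables are the positive literals, $\mathrm{var}(x)$ the underlying variable. A clause is a finite set $C$ of literals with $C \cap \overline{C} = \emptyset$. A multi-clause-set is a map $F$ from clauses to $\mathbb{N}_0$ with finitely many clauses of nonzero multiplicity; its underlying clause-set is the set of clauses with nonzero multiplicity. $\mathrm{var}(F)$ is the set of variables occurring in it, $n(F) = |\mathrm{var}(F)|$, $c(F) = \sum_C F(C)$, $\delta(F) = c(F) - n(F)$. Literal degree $\mathrm{ld}_F(x) = \sum_{C \ni x} F(C)$; $\mathrm{vdeg}_F(v) = \mathrm{ld}_F(v) + \mathrm{ld}_F(\overline{v})$; $\mathrm{minvdeg}(F) = \min_{v \in \mathrm{var}(F)} \mathrm{vdeg}_F(v)$ (and $+\infty$ if $n(F)=0$). Surplus: if $n(F) > 0$, $\sigma(F) = \min_{\emptyset \ne V \subseteq \mathrm{var}(F)} \big( \sum_{C : \mathrm{var}(C) \cap V \ne \emptyset} F(C) - |V| \big)$, and $\sigma(F) = 0$ if $n(F)=0$. A partial assignment is a map $\varphi : V \to \{0,1\}$ for a finite set $V$ of variables, with $\varphi(\overline{v}) = 1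 - \varphi(v)$; it is an autarky for a clause-set $G$ if every clause $C \in G$ containing a literal falsified by $\varphi$ also contains a literal satisfied by $\varphi$. A clause-set $G$ is lean if there is no autarky $\varphi$ for $G$ with $\mathrm{var}(\varphi) \cap \mathrm{var}(G) \ne \emptyset$; a multi-clause-set is lean iff its underlying clause-set is. The function $\mathrm{N} : \mathbb{N} \to \mathbb{N}$ is defined by $\mathrm{N}(1) = 2$ and $\mathrm{N}(k) = \max_{i \in \{2,\dots,k\}} \min(2i, \mathrm{N}(k-i+1)+i)$ for $k \ge 2$. *)

theory Defs
  imports Main "HOL-Library.Multiset" "HOL-Library.Extended_Nat"
begin

datatype 'v lit = Pos 'v | Neg 'v

fun comp :: "'v lit \<Rightarrow> 'v lit" where
  "comp (Pos v) = Neg v"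
| "comp (Neg v) = Pos v"

fun var_lit :: "'v lit \<Rightarrow> 'v" where
  "var_lit (Pos v) = v"
| "var_lit (Neg v) = v"

definition clause :: "'v lit set \<Rightarrow> bool" where
  "clause C \<longleftrightarrow> finite C \<and> C \<inter> comp ` C = {}"

definition vars_cl :: "'v lit set \<Rightarrow> 'v set" where
  "vars_cl C = var_lit ` C"

definition multi_clause_set :: "'v lit set multiset \<Rightarrow> bool" where
  "multi_clause_set F \<longleftrightarrow> (\<forall>C \<in># F. clause C)"

definition vars_cs :: "'v lit set set \<Rightarrow> 'v set" where
  "vars_cs G = (\<Union>C\<in>G. vars_cl C)"

definition vars :: "'v lit set multiset \<Rightarrow> 'v set" where
  "vars F = vars_cs (set_mset F)"

definition nvars :: "'v lit set multiset \<Rightarrow> nat" where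
  "nvars F = card (vars F)"

definition ld :: "'v lit set multiset \<Rightarrow> 'v lit \<Rightarrow> nat" where
  "ld F x = size (filter_mset (\<lambda>C. x \<in> C) F)"

definition vdeg :: "'v lit set multiset \<Rightarrow> 'v \<Rightarrow> nat" where
  "vdeg F v = ld F (Pos v) + ld F (Neg v)"

definition minvdeg :: "'v lit set multiset \<Rightarrow> enat" where
  "minvdeg F = (if vars F = {} then \<infinity> else enat (Min (vdeg F ` vars F)))"

definition surplus :: "'v lit set multiset \<Rightarrow> int" where
  "surplus F = (if vars F = {} then 0 else
     Min {int (size (filter_mset (\<lambda>C. vars_cl C \<inter> V \<noteq> {}) F)) - int (card V)
          | V. V \<noteq> {} \<and> V \<subseteq> vars F})"

fun lit_val :: "('v \<rightharpoonup> bool) \<Rightarrow> 'v lit \<Rightarrow> bool option" where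
  "lit_val \<phi> (Pos v) = \<phi> v"
| "lit_val \<phi> (Neg v) = map_option Not (\<phi> v)"

definition autarky :: "('v \<rightharpoonup> bool) \<Rightarrow> 'v lit set set \<Rightarrow> bool" where
  "autarky \<phi> G \<longleftrightarrow> (\<forall>C\<in>G. (\<exists>x\<in>C. lit_val \<phi> x = Some False) \<longrightarrow> (\<exists>x\<in>C. lit_val \<phi> x = Some True))"

definition lean_cs :: "'v lit set set \<Rightarrow> bool" where
  "lean_cs G \<longleftrightarrow> \<not> (\<exists>\<phi>. finite (dom \<phi>) \<and> autarky \<phi> G \<and> dom \<phi> \<inter> vars_cs G \<noteq> {})"

definition lean :: "'v lit set multiset \<Rightarrow> bool" where
  "lean F \<longleftrightarrow> lean_cs (set_mset F)"

text \<open>N(1) = 2, N(k) = max over i in 2..k of min(2i, N(k-i+1)+i); N 0 := 2 (outside the paper's domain).\<close>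
function N :: "nat \<Rightarrow> nat" where
  "N k = (if k \<le> 1 then 2 else Max ((\<lambda>i. min (2*i) (N (k - i + 1) + i)) ` {2..k}))"
  by auto
termination
  by (relation "measure id") auto

end

(*
  Restricting F to a smallest set V of variables attaining the surplus preserves leanness,
  the surplus and all degrees of variables in V, and gives a clause-set G that is tight:
  its surplus is its deficiency c(G) - n(G) and is attained by var(G) alone. In a tight lean G,
  assigning a literal x keeps a lean clause-set on all of var(G) - {var x}: otherwise the part
  of it left over by a maximal autarky would, counting against tightness, be a lean
  clause-set of non-positive surplus, which the same induction excludes. So the surplus drops
  by at least ld(x) - 1, whence ld(x) \<le> \<sigma>(G). For a variable v of minimal degree, assigning
  its more frequent literal (of degree a) and using induction on the result bounds vdeg(v) by
  min(2a, N(\<sigma> - a + 1) + a) \<le> N(\<sigma>).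
*)

theory Submission
  imports Defs
begin

declare N.simps [simp del]

lemma var_lit_comp [simp]: "var_lit (comp x) = var_lit x"
  by (cases x) auto

lemma var_lit_eq_iff: "var_lit y = var_lit x \<longleftrightarrow> y = x \<or> y = comp x"
  by (cases x; cases y) auto

fun polarity :: "'v lit \<Rightarrow> bool" where
  "polarity (Pos v) = True"
| "polarity (Neg v) = False"

lemma lit_val_polarity [simp]: "lit_val (\<phi>(var_lit x \<mapsto> polarity x)) x = Some True"
  by (cases x) auto

lemma lit_val_falsify_iff: "lit_val [var_lit x \<mapsto> \<not> polarity x] y = Some False \<longleftrightarrow> y = x"
  by (cases x; cases y) auto

lemma lit_val_dom: "lit_val \<phi> y = Some b \<Longrightarrow> var_lit y \<in> dom \<phi>"
  by (cases y) auto

lemma lit_val_cong: "\<phi> (var_lit y) = \<psi> (var_lit y) \<Longrightarrow> lit_val \<phi> y = lit_val \<psi> y"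
  by (cases y) auto

lemma clause_not_both: "clause C \<Longrightarrow> Pos v \<in> C \<Longrightarrow> Neg v \<notin> C"
  unfolding clause_def by (metis comp.simps(1) disjoint_iff image_eqI)

lemma var_lit_in_vars: "C \<in># F \<Longrightarrow> y \<in> C \<Longrightarrow> var_lit y \<in> vars F"
  by (auto simp: vars_def vars_cs_def vars_cl_def)

lemma in_vars_iff: "u \<in> vars F \<longleftrightarrow> (\<exists>C\<in>#F. \<exists>y\<in>C. var_lit y = u)"
  by (auto simp: vars_def vars_cs_def vars_cl_def)

lemma finite_vars: "multi_clause_set F \<Longrightarrow> finite (vars F)"
  unfolding multi_clause_set_def vars_def vars_cs_def vars_cl_def clause_def by auto

lemma multi_clause_set_filter: "multi_clause_set F \<Longrightarrow> multi_clause_set (filter_mset P F)"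
  unfolding multi_clause_set_def by auto

lemma ld_gt_0_iff: "0 < ld F x \<longleftrightarrow> (\<exists>C\<in>#F. x \<in> C)"
  unfolding ld_def by (induction F) auto

lemma vdeg_var_lit: "vdeg F (var_lit y) = ld F y + ld F (comp y)"
  by (cases y) (auto simp: vdeg_def)

lemma size_filter_mono:
  "(\<And>C. C \<in># M \<Longrightarrow> P C \<Longrightarrow> Q C) \<Longrightarrow> size (filter_mset P M) \<le> size (filter_mset Q M)"
  by (induction M) auto

lemma size_filter_le_split:
  "size (filter_mset P M) \<le> size {#C \<in># M. \<not> Q C \<and> P C#} + size (filter_mset Q M)"
  by (induction M) auto

lemma size_filter_complement: "size (filter_mset P M) + size {#C \<in># M. \<not> P C#} = size M"
  by (induction M) auto

lemma size_filter_disj: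
  "(\<And>C. C \<in># M \<Longrightarrow> \<not> (P C \<and> Q C)) \<Longrightarrow>
    size (filter_mset P M) + size (filter_mset Q M) = size {#C \<in># M. P C \<or> Q C#}"
  by (induction M) auto

lemma vdeg_eq_size_filter:
  "multi_clause_set F \<Longrightarrow> vdeg F v = size {#C \<in># F. Pos v \<in> C \<or> Neg v \<in> C#}"
  unfolding vdeg_def ld_def multi_clause_set_def
  by (rule size_filter_disj) (meson clause_not_both)

lemma vdeg_le_size: "multi_clause_set F \<Longrightarrow> vdeg F v \<le> size F"
  by (simp add: vdeg_eq_size_filter)

section \<open>Surplus\<close>

definition touching :: "'v lit set multiset \<Rightarrow> 'v set \<Rightarrow> 'v lit set multiset" where
  "touching F V = {#C \<in># F. vars_cl C \<inter> V \<noteq> {}#}"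

definition excess :: "'v lit set multiset \<Rightarrow> 'v set \<Rightarrow> int" where
  "excess F V = int (size (touching F V)) - int (card V)"

lemma excess_le: "excess F V \<le> int (size F) - int (card V)"
  unfolding excess_def touching_def using size_filter_mset_lesseq by simp

lemma excess_vars:
  assumes "{} \<notin># F" shows "excess F (vars F) = int (size F) - int (card (vars F))"
proof -
  have "vars_cl C \<inter> vars F \<noteq> {}" if "C \<in># F" for C
    using that assms by (metis all_not_in_conv image_eqI var_lit_in_vars vars_cl_def disjoint_iff)
  then have "touching F (vars F) = F" by (simp add: touching_def filter_mset_eq_conv)
  then show ?thesis by (simp add: excess_def)
qed

lemma surplus_eq_Min:
  "vars F \<noteq> {} \<Longrightarrow> surplus F = Min (excess F ` {V. V \<noteq> {} \<and> V \<subseteq> vars F})"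
  unfolding surplus_def excess_def touching_def by (simp add: image_def) meson

lemma finite_nonempty_subsets: "finite A \<Longrightarrow> finite {V. V \<noteq> {} \<and> V \<subseteq> A}"
  by (auto intro: finite_subset[of _ "Pow A"])

lemma surplus_le_excess:
  assumes "finite (vars F)" "V \<noteq> {}" "V \<subseteq> vars F"
  shows "surplus F \<le> excess F V"
proof -
  have "vars F \<noteq> {}" using assms(2,3) by blast
  then show ?thesis
    using assms finite_nonempty_subsets[OF assms(1)] by (auto simp: surplus_eq_Min intro!: Min_le)
qed

lemma surplus_attained:
  assumes "finite (vars F)" "vars F \<noteq> {}"
  obtains V where "V \<noteq> {}" "V \<subseteq> vars F" "surplus F = excess F V"
proof -
  have "surplus F \<in> excess F ` {V. V \<noteq> {} \<and> V \<subseteq> vars F}"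
    unfolding surplus_eq_Min[OF assms(2)] using assms finite_nonempty_subsets
    by (intro Min_in) auto
  then show thesis using that by auto
qed

definition tight :: "'v lit set multiset \<Rightarrow> bool" where
  "tight F \<longleftrightarrow> {} \<notin># F \<and>
    (\<forall>W. W \<noteq> {} \<longrightarrow> W \<subset> vars F \<longrightarrow> int (size F) - int (card (vars F)) < excess F W)"

lemma surplus_tight:
  assumes "finite (vars F)" "vars F \<noteq> {}" "tight F"
  shows "surplus F = int (size F) - int (card (vars F))"
proof -
  obtain V where V: "V \<noteq> {}" "V \<subseteq> vars F" "surplus F = excess F V"
    using surplus_attained[OF assms(1,2)] .
  have "surplus F \<le> int (size F) - int (card (vars F))"
    using surplus_le_excess[OF assms(1,2) order_refl] assms(3) by (simp add: tight_def excess_vars)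
  moreover have "excess F V \<ge> int (size F) - int (card (vars F))"
  proof (cases "V = vars F")
    case True
    then show ?thesis using assms(3) by (simp add: tight_def excess_vars)
  next
    case False
    then have "V \<subset> vars F" using V(2) by blast
    then show ?thesis using assms(3) V(1) unfolding tight_def by (meson less_imp_le)
  qed
  ultimately show ?thesis using V(3) by simp
qed

section \<open>Autarkies\<close>

lemma autarkyI:
  "(\<And>C y. C \<in> G \<Longrightarrow> y \<in> C \<Longrightarrow> lit_val \<psi> y = Some False \<Longrightarrow> \<exists>z\<in>C. lit_val \<psi> z = Some True)
    \<Longrightarrow> autarky \<psi> G"
  unfolding autarky_def by blast

lemma lean_iff:
  "lean F \<longleftrightarrow> (\<forall>\<phi>. finite (dom \<phi>) \<longrightarrow> autarky \<phi> (set_mset F) \<longrightarrow> dom \<phi> \<inter> vars F = {})"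
  unfolding lean_def lean_cs_def vars_def by blast

lemma autarky_satisfies_touched:
  assumes "autarky \<psi> G" "C \<in> G" "vars_cl C \<inter> dom \<psi> \<noteq> {}"
  shows "\<exists>z\<in>C. lit_val \<psi> z = Some True"
proof -
  obtain y b where y: "y \<in> C" "\<psi> (var_lit y) = Some b"
    using assms(3) by (auto simp: vars_cl_def)
  then have "lit_val \<psi> y = Some True \<or> lit_val \<psi> y = Some False"
    by (cases y; cases b) auto
  then show ?thesis using assms(1,2) y(1) unfolding autarky_def by blast
qed

lemma autarky_if_disjoint: "dom \<psi> \<inter> vars_cs G = {} \<Longrightarrow> autarky \<psi> G"
  unfolding autarky_def vars_cs_def vars_cl_def by (fastforce dest: lit_val_dom)

lemma autarky_restrict:
  assumes "autarky \<psi> G" "vars_cs G \<subseteq> B"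
  shows "autarky (\<psi> |` B) G"
proof -
  have "lit_val (\<psi> |` B) y = lit_val \<psi> y" if "C \<in> G" "y \<in> C" for C y
  proof -
    have "var_lit y \<in> B" using that assms(2) by (auto simp: vars_cs_def vars_cl_def)
    then show ?thesis by (intro lit_val_cong) simp
  qed
  then show ?thesis using assms(1) unfolding autarky_def by (metis (no_types, lifting))
qed

definition avoiding :: "'v lit set multiset \<Rightarrow> 'v set \<Rightarrow> 'v lit set multiset" where
  "avoiding F A = {#C \<in># F. vars_cl C \<inter> A = {}#}"

lemma vars_avoiding: "vars (avoiding F A) \<subseteq> vars F - A"
  unfolding avoiding_def vars_def vars_cs_def vars_cl_def by auto

lemma autarky_map_add:
  assumes "autarky \<psi> (set_mset F)" "autarky \<chi> (set_mset (avoiding F (dom \<psi>)))"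
  shows "autarky (\<chi> ++ \<psi>) (set_mset F)"
proof (rule autarkyI)
  fix C y assume C: "C \<in> set_mset F" "y \<in> C" "lit_val (\<chi> ++ \<psi>) y = Some False"
  show "\<exists>z\<in>C. lit_val (\<chi> ++ \<psi>) z = Some True"
  proof (cases "vars_cl C \<inter> dom \<psi> = {}")
    case True
    have agree: "lit_val (\<chi> ++ \<psi>) z = lit_val \<chi> z" if "z \<in> C" for z
    proof -
      have "var_lit z \<notin> dom \<psi>" using that True unfolding vars_cl_def by blast
      then show ?thesis by (intro lit_val_cong) (simp add: map_add_dom_app_simps(3))
    qed
    have "C \<in> set_mset (avoiding F (dom \<psi>))" using C(1) True by (simp add: avoiding_def)
    moreover have "lit_val \<chi> y = Some False" using agree C(2,3) by simp
    ultimately obtain z where "z \<in> C" "lit_val \<chi> z = Some True"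
      using assms(2) C(2) unfolding autarky_def by blast
    then show ?thesis using agree by auto
  next
    case False
    then obtain z where z: "z \<in> C" "lit_val \<psi> z = Some True"
      using autarky_satisfies_touched[OF assms(1) C(1)] by blast
    then have "lit_val (\<chi> ++ \<psi>) z = lit_val \<psi> z"
      using lit_val_dom[OF z(2)] by (intro lit_val_cong) (simp add: map_add_dom_app_simps(1))
    then show ?thesis using z by auto
  qed
qed

lemma lean_ld_pos:
  assumes "lean F" "var_lit x \<in> vars F"
  shows "0 < ld F x"
proof (rule ccontr)
  assume "\<not> 0 < ld F x"
  then have absent: "x \<notin> C" if "C \<in># F" for C using that by (simp add: ld_gt_0_iff)
  let ?\<phi> = "[var_lit x \<mapsto> \<not> polarity x]"
  have "autarky ?\<phi> (set_mset F)"
  proof (rule autarkyI)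
    fix C y assume "C \<in> set_mset F" "y \<in> C" "lit_val ?\<phi> y = Some False"
    then have "y = x" by (simp add: lit_val_falsify_iff)
    then have False using absent \<open>C \<in> set_mset F\<close> \<open>y \<in> C\<close> by simp
    then show "\<exists>z\<in>C. lit_val ?\<phi> z = Some True" ..
  qed
  moreover have "finite (dom ?\<phi>)" by simp
  ultimately have "dom ?\<phi> \<inter> vars F = {}" using assms(1) unfolding lean_iff by blast
  then show False using assms(2) by simp
qed

text \<open>Take an autarky with a largest domain: any autarky of the remainder would extend it.\<close>
lemma lean_kernel:
  assumes "finite (vars F)"
  obtains \<psi> where "autarky \<psi> (set_mset F)" "dom \<psi> \<subseteq> vars F"
    "lean (avoiding F (dom \<psi>))" "vars (avoiding F (dom \<psi>)) = vars F - dom \<psi>"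
proof -
  let ?P = "\<lambda>\<psi>. autarky \<psi> (set_mset F) \<and> dom \<psi> \<subseteq> vars F"
  have empty: "?P Map.empty" by (intro conjI autarky_if_disjoint) simp_all
  have bounded: "\<forall>\<psi>. ?P \<psi> \<longrightarrow> card (dom \<psi>) < Suc (card (vars F))"
    using card_mono[OF assms] by (simp add: less_Suc_eq_le)
  obtain \<psi> where \<psi>: "?P \<psi>" and max: "\<forall>\<psi>'. ?P \<psi>' \<longrightarrow> card (dom \<psi>') \<le> card (dom \<psi>)"
    using ex_has_greatest_nat[OF empty bounded] by blast
  let ?R = "avoiding F (dom \<psi>)"
  have vars_R: "vars ?R \<subseteq> vars F - dom \<psi>" by (rule vars_avoiding)
  have no_extension: "dom \<chi> \<inter> (vars F - dom \<psi>) = {}" if "autarky \<chi> (set_mset ?R)" for \<chi>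
  proof -
    let ?\<chi> = "\<chi> |` (vars F - dom \<psi>)"
    have "autarky (?\<chi> ++ \<psi>) (set_mset F)"
      using \<psi> autarky_restrict[OF that] vars_R by (intro autarky_map_add) (auto simp: vars_def)
    moreover have "dom (?\<chi> ++ \<psi>) \<subseteq> vars F" using \<psi> by auto
    ultimately have "card (dom (?\<chi> ++ \<psi>)) \<le> card (dom \<psi>)" using max by blast
    moreover have "dom (?\<chi> ++ \<psi>) = (dom \<chi> \<inter> (vars F - dom \<psi>)) \<union> dom \<psi>" by auto
    ultimately have "card ((dom \<chi> \<inter> (vars F - dom \<psi>)) \<union> dom \<psi>) \<le> card (dom \<psi>)" by simp
    moreover have "finite (dom \<psi>)" "finite (dom \<chi> \<inter> (vars F - dom \<psi>))"
      using \<psi> assms finite_subset by auto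
    ultimately show ?thesis by (subst (asm) card_Un_disjoint) auto
  qed
  have "vars F - dom \<psi> \<subseteq> vars ?R"
  proof
    fix u assume u: "u \<in> vars F - dom \<psi>"
    show "u \<in> vars ?R"
    proof (rule ccontr)
      assume "u \<notin> vars ?R"
      then have "autarky [u \<mapsto> True] (set_mset ?R)"
        by (intro autarky_if_disjoint) (simp add: vars_def)
      then have "dom [u \<mapsto> True] \<inter> (vars F - dom \<psi>) = {}" by (rule no_extension)
      with u show False by simp
    qed
  qed
  then have "vars ?R = vars F - dom \<psi>" using vars_R by blast
  moreover have "lean ?R"
    unfolding lean_iff using no_extension vars_R by (meson disjoint_iff subsetD)
  ultimately show thesis using \<psi> by (intro that) auto
qed

section \<open>Restriction to a set of variables\<close>

definition litsof :: "'v set \<Rightarrow> 'v lit set" where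
  "litsof V = {y. var_lit y \<in> V}"

text \<open>The paper's \<open>F[V]\<close>: the clauses meeting \<open>V\<close>, cut down to their literals over \<open>V\<close>.\<close>
definition restr :: "'v set \<Rightarrow> 'v lit set multiset \<Rightarrow> 'v lit set multiset" where
  "restr V F = image_mset (\<lambda>C. C \<inter> litsof V) (touching F V)"

lemma vars_cl_inter_litsof: "vars_cl (C \<inter> litsof V) = vars_cl C \<inter> V"
  by (auto simp: vars_cl_def litsof_def)

lemma multi_clause_set_restr: "multi_clause_set F \<Longrightarrow> multi_clause_set (restr V F)"
  unfolding multi_clause_set_def restr_def clause_def touching_def by auto

lemma vars_restr_subset: "vars (restr V F) \<subseteq> V \<inter> vars F"
  by (fastforce simp: restr_def touching_def vars_def vars_cs_def vars_cl_inter_litsof)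

lemma vars_restr: assumes "V \<subseteq> vars F" shows "vars (restr V F) = V"
proof -
  have "u \<in> vars (restr V F)" if "u \<in> V" for u
  proof -
    obtain C where C: "C \<in># F" "u \<in> vars_cl C"
      using assms \<open>u \<in> V\<close> unfolding vars_def vars_cs_def by blast
    then have "C \<in># touching F V" using \<open>u \<in> V\<close> by (auto simp: touching_def)
    then have "C \<inter> litsof V \<in># restr V F" unfolding restr_def in_image_mset by (rule imageI)
    moreover have "u \<in> vars_cl (C \<inter> litsof V)" using C \<open>u \<in> V\<close> by (simp add: vars_cl_inter_litsof)
    ultimately show ?thesis unfolding vars_def vars_cs_def by (rule UN_I)
  qed
  then show ?thesis using vars_restr_subset[of V F] by blast
qed

lemma empty_not_in_restr: "{} \<notin># restr V F"
  unfolding restr_def touching_def by (auto simp: litsof_def vars_cl_def)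

lemma size_restr: "size (restr V F) = size (touching F V)"
  unfolding restr_def by simp

lemma excess_restr: assumes "W \<subseteq> V" shows "excess (restr V F) W = excess F W"
proof -
  have "touching (restr V F) W = image_mset (\<lambda>C. C \<inter> litsof V) (touching F W)"
    unfolding restr_def touching_def filter_mset_image_mset filter_filter_mset
    using assms by (intro arg_cong[where f = "image_mset _"] filter_mset_cong)
      (auto simp: vars_cl_inter_litsof)
  then show ?thesis by (simp add: excess_def)
qed

lemma ld_restr: assumes "var_lit y \<in> V" shows "ld (restr V F) y = ld F y"
proof -
  have "{#C \<in># F. vars_cl C \<inter> V \<noteq> {} \<and> y \<in> C \<inter> litsof V#} = {#C \<in># F. y \<in> C#}"
    using assms by (intro filter_mset_cong) (auto simp: litsof_def vars_cl_def)
  then show ?thesis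
    by (simp add: ld_def restr_def touching_def filter_mset_image_mset filter_filter_mset)
qed

lemma vdeg_restr: "v \<in> V \<Longrightarrow> vdeg (restr V F) v = vdeg F v"
  by (simp add: vdeg_def ld_restr)

lemma lean_restr: assumes "lean F" shows "lean (restr V F)"
  unfolding lean_iff
proof (intro allI impI)
  fix \<phi> assume fin: "finite (dom \<phi>)" and aut: "autarky \<phi> (set_mset (restr V F))"
  have same: "lit_val (\<phi> |` V) y = lit_val \<phi> y" if "var_lit y \<in> V" for y
    using that by (intro lit_val_cong) simp
  have "autarky (\<phi> |` V) (set_mset F)"
  proof (rule autarkyI)
    fix C y assume C: "C \<in> set_mset F" "y \<in> C" "lit_val (\<phi> |` V) y = Some False"
    have yV: "y \<in> litsof V" using lit_val_dom[OF C(3)] by (simp add: litsof_def)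
    then have "C \<inter> litsof V \<in> set_mset (restr V F)"
      using C(1,2) by (auto simp: restr_def touching_def litsof_def vars_cl_def)
    then obtain z where z: "z \<in> C \<inter> litsof V" "lit_val \<phi> z = Some True"
      using aut C(2,3) yV same unfolding autarky_def litsof_def by fastforce
    then have "lit_val (\<phi> |` V) z = Some True" using same by (simp add: litsof_def)
    then show "\<exists>z\<in>C. lit_val (\<phi> |` V) z = Some True" using z(1) by blast
  qed
  moreover have "finite (dom (\<phi> |` V))" using fin by simp
  ultimately have "dom (\<phi> |` V) \<inter> vars F = {}" using assms unfolding lean_iff by blast
  then show "dom \<phi> \<inter> vars (restr V F) = {}" using vars_restr_subset by fastforce
qed

lemma exists_tight_restr:
  assumes "finite (vars F)" "vars F \<noteq> {}"
  obtains V where "V \<noteq> {}" "V \<subseteq> vars F" "tight (restr V F)" "surplus (restr V F) = surplus F"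
proof -
  let ?att = "\<lambda>V. V \<noteq> {} \<and> V \<subseteq> vars F \<and> surplus F = excess F V"
  obtain V0 where "V0 \<noteq> {}" "V0 \<subseteq> vars F" "surplus F = excess F V0"
    using surplus_attained[OF assms] .
  then have "\<exists>V. ?att V \<and> (\<forall>W. ?att W \<longrightarrow> card V \<le> card W)"
    by (intro ex_has_least_nat[of ?att V0]) blast
  then obtain V where V: "?att V" and V_min: "\<forall>W. ?att W \<longrightarrow> card V \<le> card W"
    by blast
  let ?G = "restr V F"
  have fin_V: "finite V" using V assms(1) finite_subset by blast
  have vars_G: "vars ?G = V" using V by (simp add: vars_restr)
  have deficiency: "int (size ?G) - int (card V) = surplus F"
    using V by (simp add: size_restr excess_def)
  have strict: "surplus F < excess ?G W" if W: "W \<noteq> {}" "W \<subset> V" for W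
  proof -
    have "card W < card V" using W fin_V psubset_card_mono by blast
    moreover have "W \<subseteq> vars F" using W V by blast
    ultimately have "surplus F \<noteq> excess F W" using V_min W(1) by (meson leD)
    moreover have "surplus F \<le> excess F W" using W V surplus_le_excess[OF assms(1)] by auto
    ultimately show ?thesis using W by (simp add: excess_restr)
  qed
  have "tight ?G" using empty_not_in_restr strict deficiency vars_G by (simp add: tight_def)
  moreover have "surplus ?G = surplus F"
    using surplus_tight[OF _ _ \<open>tight ?G\<close>] vars_G fin_V V deficiency by simp
  ultimately show thesis using that V by blast
qed

lemma lean_tight_induct [consumes 3, case_names restr tight]:
  fixes F :: "'v lit set multiset"
  assumes "multi_clause_set F" "lean F" "vars F \<noteq> {}"
    and restr: "\<And>(F :: 'v lit set multiset) V. V \<subseteq> vars F \<Longrightarrow>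
      surplus (restr V F) = surplus F \<Longrightarrow> P (restr V F) \<Longrightarrow> P F"
    and tight: "\<And>G :: 'v lit set multiset. multi_clause_set G \<Longrightarrow> lean G \<Longrightarrow> tight G \<Longrightarrow>
      vars G \<noteq> {} \<Longrightarrow> (\<And>H :: 'v lit set multiset. multi_clause_set H \<Longrightarrow> lean H \<Longrightarrow>
        vars H \<noteq> {} \<Longrightarrow> card (vars H) < card (vars G) \<Longrightarrow> P H) \<Longrightarrow> P G"
  shows "P F"
  using assms(1-3)
proof (induction "card (vars F)" arbitrary: F rule: less_induct)
  case less
  obtain V where V: "V \<noteq> {}" "V \<subseteq> vars F" "tight (restr V F)" "surplus (restr V F) = surplus F"
    using exists_tight_restr[OF finite_vars[OF less.prems(1)] less.prems(3)] .
  have vars_G: "vars (restr V F) = V" using V(2) by (rule vars_restr)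
  have "card V \<le> card (vars F)" using V(2) finite_vars[OF less.prems(1)] card_mono by blast
  have "P (restr V F)"
  proof (rule tight)
    fix H :: "'v lit set multiset"
    assume H: "multi_clause_set H" "lean H" "vars H \<noteq> {}"
      "card (vars H) < card (vars (restr V F))"
    show "P H" using less.hyps[OF _ H(1-3)] H(4) \<open>card V \<le> card (vars F)\<close> vars_G by simp
  qed (use less.prems V vars_G in \<open>simp_all add: multi_clause_set_restr lean_restr\<close>)
  with V(2,4) show ?case by (rule restr)
qed

section \<open>Assigning a literal\<close>

text \<open>The paper's \<open>\<langle>x \<rightarrow> 1\<rangle> * F\<close>: clauses containing \<open>x\<close> are removed, \<open>comp x\<close> is deleted
  from the others.\<close>
definition assign :: "'v lit \<Rightarrow> 'v lit set multiset \<Rightarrow> 'v lit set multiset" where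
  "assign x G = image_mset (\<lambda>C. C - {comp x}) {#C \<in># G. x \<notin> C#}"

lemma multi_clause_set_assign: "multi_clause_set G \<Longrightarrow> multi_clause_set (assign x G)"
  unfolding multi_clause_set_def assign_def clause_def by auto

lemma size_assign: "size (assign x G) + ld G x = size G"
  using size_filter_complement[of "\<lambda>C. x \<in> C" G] by (simp add: assign_def ld_def)

lemma vars_assign: "vars (assign x G) \<subseteq> vars G - {var_lit x}"
proof
  fix u assume "u \<in> vars (assign x G)"
  then obtain D y where D: "D \<in># assign x G" "y \<in> D" "var_lit y = u"
    unfolding in_vars_iff by blast
  then obtain C where C: "C \<in># G" "x \<notin> C" "D = C - {comp x}"
    unfolding assign_def by auto
  then have "y \<in> C" "y \<noteq> x" "y \<noteq> comp x" using D(2) by auto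
  then show "u \<in> vars G - {var_lit x}"
    using var_lit_in_vars[OF C(1) \<open>y \<in> C\<close>] var_lit_eq_iff[of y x] D(3) by simp
qed

lemma vdeg_assign:
  assumes "multi_clause_set G" "w \<noteq> var_lit x"
  shows "vdeg G w \<le> vdeg (assign x G) w + ld G x"
proof -
  let ?T = "\<lambda>C. Pos w \<in> C \<or> Neg w \<in> C"
  have "comp x \<noteq> Pos w" "comp x \<noteq> Neg w" using assms(2) by (cases x; simp)+
  then have "vdeg (assign x G) w = size {#C \<in># G. x \<notin> C \<and> ?T C#}"
    using vdeg_eq_size_filter[OF multi_clause_set_assign[OF assms(1)]]
    by (simp add: assign_def filter_mset_image_mset filter_filter_mset)
  moreover have "vdeg G w \<le> size {#C \<in># G. x \<notin> C \<and> ?T C#} + ld G x"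
    using size_filter_le_split[of ?T G "\<lambda>C. x \<in> C"] assms(1)
    by (simp add: vdeg_eq_size_filter ld_def)
  ultimately show ?thesis by simp
qed

lemma autarky_upd_if_assign_satisfied:
  assumes "\<And>C. C \<in># assign x G \<Longrightarrow> \<exists>z\<in>C. lit_val \<psi> z = Some True" "var_lit x \<notin> dom \<psi>"
  shows "autarky (\<psi>(var_lit x \<mapsto> polarity x)) (set_mset G)"
proof (rule autarkyI)
  fix C y assume C: "C \<in> set_mset G"
  show "\<exists>z\<in>C. lit_val (\<psi>(var_lit x \<mapsto> polarity x)) z = Some True"
  proof (cases "x \<in> C")
    case False
    then obtain z where z: "z \<in> C - {comp x}" "lit_val \<psi> z = Some True"
      using assms(1)[of "C - {comp x}"] C by (auto simp: assign_def)
    then have "var_lit z \<noteq> var_lit x" using assms(2) lit_val_dom by fastforce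
    then show ?thesis using z by (metis DiffD1 fun_upd_other lit_val_cong)
  qed (use lit_val_polarity[of \<psi> x] in blast)
qed

lemma surplus_assign_le:
  assumes "multi_clause_set G" "tight G" "vars (assign x G) = vars G - {var_lit x}"
    "var_lit x \<in> vars G" "vars (assign x G) \<noteq> {}"
  shows "surplus (assign x G) \<le> surplus G - int (ld G x) + 1"
proof -
  have fin: "finite (vars G)" using assms(1) finite_vars by blast
  have "card (vars (assign x G)) = card (vars G) - 1" using assms(3,4) by simp
  then have "surplus (assign x G) \<le> int (size (assign x G)) - int (card (vars G) - 1)"
    using surplus_le_excess[OF finite_vars[OF multi_clause_set_assign[OF assms(1)]] assms(5) order_refl]
      excess_le[of "assign x G" "vars (assign x G)"] by simp
  moreover have "card (vars G) \<ge> 1" using assms(4) fin by (auto simp: Suc_le_eq card_gt_0_iff)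
  moreover have "vars G \<noteq> {}" using assms(4) by blast
  ultimately show ?thesis using size_assign[of x G] surplus_tight[OF fin _ assms(2)] by linarith
qed

text \<open>The counting step of \<open>lean_assign_if_tight\<close>: a remainder of \<open>assign x G\<close> that misses some
  variable of \<open>G\<close> other than \<open>var_lit x\<close> has deficiency at most \<open>0\<close>.\<close>
lemma avoiding_assign_small:
  assumes G: "multi_clause_set G" "tight G" "var_lit x \<in> vars G"
    and A: "vars (avoiding (assign x G) A) = vars (assign x G) - A"
    and missing: "vars G - insert (var_lit x) (vars (avoiding (assign x G) A)) \<noteq> {}"
  shows "size (avoiding (assign x G) A) \<le> card (vars (avoiding (assign x G) A))"
proof -
  define F' where "F' = assign x G"
  define R where "R = avoiding F' A"
  define W where "W = vars G - insert (var_lit x) (vars R)"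
  have fin: "finite (vars G)" using G(1) finite_vars by blast
  have vars_R: "vars R = vars F' - A" using A by (simp add: R_def F'_def)
  have vars_F': "vars F' \<subseteq> vars G - {var_lit x}" unfolding F'_def by (rule vars_assign)
  have R_sub: "insert (var_lit x) (vars R) \<subseteq> vars G" using vars_R vars_F' G(3) by blast
  have "var_lit x \<notin> vars R" using vars_R vars_F' by blast
  then have card_W: "card W + card (vars R) + 1 = card (vars G)"
    using card_Diff_subset[OF finite_subset[OF R_sub fin] R_sub] card_mono[OF fin R_sub]
      finite_subset[OF R_sub fin] by (simp add: W_def)
  have "W \<noteq> {}" using missing by (simp add: W_def R_def F'_def)
  moreover have "W \<subset> vars G" using G(3) by (auto simp: W_def)
  ultimately have tight_W: "int (size G) - int (card (vars G)) < excess G W"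
    using G(2) by (simp add: tight_def)
  have W_to_A: "size {#C \<in># G. x \<notin> C \<and> vars_cl C \<inter> W \<noteq> {}#}
      \<le> size {#C \<in># G. x \<notin> C \<and> vars_cl (C - {comp x}) \<inter> A \<noteq> {}#}"
  proof (rule size_filter_mono)
    fix C assume C: "C \<in># G" "x \<notin> C \<and> vars_cl C \<inter> W \<noteq> {}"
    then obtain y where y: "y \<in> C" "var_lit y \<in> W" by (auto simp: vars_cl_def)
    then have y': "y \<in> C - {comp x}" by (auto simp: W_def)
    have "C - {comp x} \<in># F'" using C by (simp add: F'_def assign_def)
    then have "var_lit y \<in> vars F'" using y' by (rule var_lit_in_vars)
    then have "var_lit y \<in> A" using y(2) vars_R by (auto simp: W_def)
    then show "x \<notin> C \<and> vars_cl (C - {comp x}) \<inter> A \<noteq> {}"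
      using C y' by (auto simp: vars_cl_def)
  qed
  have "size (touching G W) \<le> size {#C \<in># G. x \<notin> C \<and> vars_cl C \<inter> W \<noteq> {}#} + ld G x"
    unfolding touching_def ld_def by (rule size_filter_le_split)
  moreover have "size {#C \<in># G. x \<notin> C \<and> vars_cl (C - {comp x}) \<inter> A \<noteq> {}#} = size (touching F' A)"
    by (simp add: F'_def assign_def touching_def filter_mset_image_mset filter_filter_mset)
  moreover have "size F' = size (touching F' A) + size R"
    using size_filter_complement[of "\<lambda>C. vars_cl C \<inter> A \<noteq> {}" F']
    by (simp add: R_def avoiding_def touching_def)
  moreover have "size F' + ld G x = size G" by (simp add: F'_def size_assign)
  ultimately have "size R \<le> card (vars R)"
    using W_to_A card_W tight_W unfolding excess_def by linarith
  then show ?thesis by (simp add: R_def F'_def)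
qed

lemma lean_assign_if_tight:
  fixes G :: "'v lit set multiset"
  assumes G: "multi_clause_set G" "lean G" "tight G" "var_lit x \<in> vars G"
    and surplus_pos: "\<And>H :: 'v lit set multiset. multi_clause_set H \<Longrightarrow> lean H \<Longrightarrow> vars H \<noteq> {} \<Longrightarrow>
      card (vars H) < card (vars G) \<Longrightarrow> 1 \<le> surplus H"
  shows "lean (assign x G)" "vars (assign x G) = vars G - {var_lit x}"
proof -
  define F' where "F' = assign x G"
  have mcs_F': "multi_clause_set F'" using G(1) by (simp add: F'_def multi_clause_set_assign)
  obtain \<psi> where \<psi>: "autarky \<psi> (set_mset F')" "dom \<psi> \<subseteq> vars F'"
    and kernel: "lean (avoiding F' (dom \<psi>))" "vars (avoiding F' (dom \<psi>)) = vars F' - dom \<psi>"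
    using lean_kernel[OF finite_vars[OF mcs_F']] .
  define R where "R = avoiding F' (dom \<psi>)"
  have mcs_R: "multi_clause_set R"
    unfolding R_def avoiding_def using mcs_F' by (rule multi_clause_set_filter)
  have lean_R: "lean R" and vars_R: "vars R = vars F' - dom \<psi>"
    using kernel by (simp_all add: R_def)
  have fin: "finite (vars G)" using G(1) finite_vars by blast
  have vars_F': "vars F' \<subseteq> vars G - {var_lit x}" unfolding F'_def by (rule vars_assign)
  have W: "vars G - insert (var_lit x) (vars R) = {}"
  proof (rule ccontr)
    assume "\<not> ?thesis"
    then have small: "size R \<le> card (vars R)"
      using avoiding_assign_small[OF G(1,3,4)] kernel(2) by (simp add: R_def F'_def)
    show False
    proof (cases "vars R = {}")
      case False
      have "vars R \<subset> vars G" using vars_R vars_F' G(4) by blast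
      then have "card (vars R) < card (vars G)" using fin by (rule psubset_card_mono[rotated])
      then have "1 \<le> surplus R" using mcs_R lean_R False by (intro surplus_pos)
      moreover have "surplus R \<le> excess R (vars R)"
        using surplus_le_excess[OF finite_vars[OF mcs_R] False order_refl] .
      ultimately show False using excess_le[of R "vars R"] small by simp
    next
      case True
      then have "R = {#}" using small by simp
      then have touched: "vars_cl C \<inter> dom \<psi> \<noteq> {}" if "C \<in># F'" for C
        using that by (simp add: R_def avoiding_def)
      have "\<exists>z\<in>C. lit_val \<psi> z = Some True" if "C \<in># F'" for C
        using autarky_satisfies_touched[OF \<psi>(1) _ touched[OF that]] that by simp
      moreover have "var_lit x \<notin> dom \<psi>" using \<psi>(2) vars_F' by blast
      ultimately have "autarky (\<psi>(var_lit x \<mapsto> polarity x)) (set_mset G)"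
        unfolding F'_def by (rule autarky_upd_if_assign_satisfied)
      moreover have "finite (dom (\<psi>(var_lit x \<mapsto> polarity x)))"
        using \<psi>(2) finite_vars[OF mcs_F'] finite_subset by auto
      ultimately have "dom (\<psi>(var_lit x \<mapsto> polarity x)) \<inter> vars G = {}"
        using G(2) unfolding lean_iff by blast
      then show False using G(4) by simp
    qed
  qed
  then have vars_eq: "vars F' = vars G - {var_lit x}" and "dom \<psi> = {}"
    using vars_F' vars_R \<psi>(2) by blast+
  then have "R = F'" by (simp add: R_def avoiding_def)
  then show "lean (assign x G)" "vars (assign x G) = vars G - {var_lit x}"
    using lean_R vars_eq by (simp_all add: F'_def)
qed

lemma ld_le_surplus_if_tight:
  fixes G :: "'v lit set multiset"
  assumes G: "multi_clause_set G" "lean G" "tight G" "var_lit y \<in> vars G"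
    and surplus_pos: "\<And>H :: 'v lit set multiset. multi_clause_set H \<Longrightarrow> lean H \<Longrightarrow> vars H \<noteq> {} \<Longrightarrow>
      card (vars H) < card (vars G) \<Longrightarrow> 1 \<le> surplus H"
  shows "int (ld G y) \<le> surplus G"
proof -
  have fin: "finite (vars G)" using G(1) finite_vars by blast
  note assign = lean_assign_if_tight[OF G surplus_pos]
  show ?thesis
  proof (cases "vars (assign y G) = {}")
    case True
    then have "vars G = {var_lit y}" using assign(2) G(4) by blast
    moreover have "ld G y + ld G (comp y) \<le> size G" using vdeg_le_size[OF G(1)] vdeg_var_lit by metis
    moreover have "0 < ld G (comp y)" using lean_ld_pos[OF G(2), of "comp y"] G(4) by simp
    ultimately show ?thesis using surplus_tight[OF fin _ G(3)] by simp
  next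
    case False
    have "card (vars (assign y G)) < card (vars G)"
      using card_Diff1_less[OF fin G(4)] assign(2) by simp
    then have "1 \<le> surplus (assign y G)"
      using surplus_pos G(1) assign(1) False by (simp add: multi_clause_set_assign)
    then show ?thesis using surplus_assign_le[OF G(1,3) assign(2) G(4) False] by linarith
  qed
qed

theorem lean_surplus_pos:
  assumes "multi_clause_set F" "lean F" "vars F \<noteq> {}"
  shows "1 \<le> surplus F"
  using assms
proof (induction rule: lean_tight_induct)
  case (tight G)
  then obtain v where v: "v \<in> vars G" by blast
  then have "int (ld G (Pos v)) \<le> surplus G"
    using ld_le_surplus_if_tight[of G "Pos v"] tight by simp
  moreover have "0 < ld G (Pos v)" using lean_ld_pos[of G "Pos v"] tight v by simp
  ultimately show ?case by linarith
qed simp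

section \<open>The function N\<close>

lemma N_small: "k \<le> 1 \<Longrightarrow> N k = 2"
  by (subst N.simps) simp

lemma N_ge_term:
  assumes "2 \<le> i" "i \<le> k"
  shows "min (2 * i) (N (k - i + 1) + i) \<le> N k"
proof -
  have "min (2 * i) (N (k - i + 1) + i) \<le> Max ((\<lambda>i. min (2 * i) (N (k - i + 1) + i)) ` {2..k})"
    by (rule Max_ge) (use assms in auto)
  then show ?thesis using assms by (subst N.simps) simp
qed

lemma N_ge_2: "2 \<le> N k"
  using N_ge_term[of 2 k] by (cases "k \<le> 1") (auto simp: N_small)

lemma N_ge_Suc: "1 \<le> k \<Longrightarrow> k + 1 \<le> N k"
  using N_ge_term[of k k] by (cases "k = 1") (auto simp: N_small)

lemma N_le_N_Suc: "N k \<le> N (Suc k)"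
proof (induction k rule: less_induct)
  case (less k)
  show ?case
  proof (cases "k \<le> 1")
    case True
    then show ?thesis using N_ge_2[of "Suc k"] by (simp add: N_small)
  next
    case False
    have "min (2 * i) (N (k - i + 1) + i) \<le> N (Suc k)" if "2 \<le> i" "i \<le> k" for i
    proof -
      have "N (k - i + 1) \<le> N (Suc k - i + 1)"
        using less.IH[of "k - i + 1"] that by (simp add: Suc_diff_le)
      then show ?thesis using N_ge_term[of i "Suc k"] that by linarith
    qed
    then show ?thesis using False by (subst N.simps) (auto intro!: Max.boundedI)
  qed
qed

lemma N_mono: "k \<le> k' \<Longrightarrow> N k \<le> N k'"
  by (rule lift_Suc_mono_le[of N]) (auto intro: N_le_N_Suc)

section \<open>The degree bound\<close>

lemma vdeg_bound_if_tight:
  fixes G :: "'v lit set multiset"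
  assumes G: "multi_clause_set G" "lean G" "tight G" "vars G \<noteq> {}"
    and IH: "\<And>H :: 'v lit set multiset. multi_clause_set H \<Longrightarrow> lean H \<Longrightarrow> vars H \<noteq> {} \<Longrightarrow>
      card (vars H) < card (vars G) \<Longrightarrow> \<exists>w\<in>vars H. vdeg H w \<le> N (nat (surplus H))"
    and v: "v \<in> vars G" "\<And>u. u \<in> vars G \<Longrightarrow> vdeg G v \<le> vdeg G u"
  shows "vdeg G v \<le> N (nat (surplus G))"
proof -
  have fin: "finite (vars G)" using G(1) finite_vars by blast
  define x where "x = (if ld G (Neg v) \<le> ld G (Pos v) then Pos v else Neg v)"
  define a where "a = ld G x"
  have x: "var_lit x = v" by (simp add: x_def)
  have x_in: "var_lit x \<in> vars G" using x v(1) by simp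
  have "vdeg G v \<le> 2 * a" by (auto simp: a_def x_def vdeg_def)
  have surplus_pos: "1 \<le> surplus H" if "multi_clause_set H" "lean H" "vars H \<noteq> {}"
    "card (vars H) < card (vars G)" for H :: "'v lit set multiset"
    using that(1-3) by (rule lean_surplus_pos)
  have a_le: "int a \<le> surplus G"
    unfolding a_def using G(1-3) x_in surplus_pos by (rule ld_le_surplus_if_tight)
  note assign = lean_assign_if_tight[OF G(1-3) x_in surplus_pos]
  show ?thesis
  proof (cases "vars (assign x G) = {}")
    case True
    then have "vars G = {v}" using assign(2) v(1) x by blast
    then have "surplus G = int (size G) - 1" using surplus_tight[OF fin G(4,3)] by simp
    then have "vdeg G v \<le> nat (surplus G) + 1" using vdeg_le_size[OF G(1), of v] by arith
    also have "\<dots> \<le> N (nat (surplus G))"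
    proof (rule N_ge_Suc)
      show "1 \<le> nat (surplus G)" using a_le lean_ld_pos[OF G(2) x_in] unfolding a_def by simp
    qed
    finally show ?thesis .
  next
    case nonempty: False
    show ?thesis
    proof (cases "a \<le> 1")
      case True
      then have "vdeg G v \<le> 2" using \<open>vdeg G v \<le> 2 * a\<close> by linarith
      then show ?thesis using N_ge_2[of "nat (surplus G)"] by linarith
    next
      case False
      have "card (vars (assign x G)) < card (vars G)"
        using card_Diff1_less[OF fin x_in] assign(2) by simp
      then have "\<exists>w\<in>vars (assign x G). vdeg (assign x G) w \<le> N (nat (surplus (assign x G)))"
        using multi_clause_set_assign[OF G(1)] assign(1) nonempty by (intro IH)
      then obtain w where w: "w \<in> vars (assign x G)"
        "vdeg (assign x G) w \<le> N (nat (surplus (assign x G)))" ..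
      have w_in: "w \<in> vars G" "w \<noteq> var_lit x" using w(1) assign(2) by auto
      have "surplus (assign x G) \<le> surplus G - int a + 1"
        unfolding a_def using G(1,3) assign(2) x_in nonempty by (rule surplus_assign_le)
      then have "N (nat (surplus (assign x G))) \<le> N (nat (surplus G) - a + 1)"
        using a_le by (intro N_mono) linarith
      moreover have "vdeg G w \<le> vdeg (assign x G) w + a"
        unfolding a_def using G(1) w_in(2) by (rule vdeg_assign)
      moreover have "vdeg G v \<le> vdeg G w" using w_in(1) by (rule v(2))
      ultimately have "vdeg G v \<le> N (nat (surplus G) - a + 1) + a" using w(2) by linarith
      then have "vdeg G v \<le> min (2 * a) (N (nat (surplus G) - a + 1) + a)"
        using \<open>vdeg G v \<le> 2 * a\<close> by simp
      also have "\<dots> \<le> N (nat (surplus G))"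
        using False a_le by (intro N_ge_term) linarith+
      finally show ?thesis .
    qed
  qed
qed

lemma lean_exists_low_degree_var:
  fixes F :: "'v lit set multiset"
  assumes "multi_clause_set F" "lean F" "vars F \<noteq> {}"
  shows "\<exists>v\<in>vars F. vdeg F v \<le> N (nat (surplus F))
    \<and> int (ld F (Pos v)) \<le> surplus F \<and> int (ld F (Neg v)) \<le> surplus F"
  using assms
proof (induction rule: lean_tight_induct)
  case (restr F V)
  obtain v where "v \<in> vars (restr V F)" "vdeg (restr V F) v \<le> N (nat (surplus (restr V F)))"
    "int (ld (restr V F) (Pos v)) \<le> surplus (restr V F)"
    "int (ld (restr V F) (Neg v)) \<le> surplus (restr V F)"
    using restr(3) by blast
  moreover have "vars (restr V F) = V" using restr(1) by (rule vars_restr)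
  ultimately show ?case using restr(1,2) by (auto simp: vdeg_restr ld_restr)
next
  case (tight G)
  have fin: "finite (vars G)" using tight(1) finite_vars by blast
  obtain v where v: "v \<in> vars G" "vdeg G v = Min (vdeg G ` vars G)"
    using Min_in[of "vdeg G ` vars G"] fin tight(4) by fastforce
  have "vdeg G v \<le> N (nat (surplus G))"
  proof (rule vdeg_bound_if_tight[OF tight(1-4) _ v(1)])
    fix H :: "'v lit set multiset"
    assume "multi_clause_set H" "lean H" "vars H \<noteq> {}" "card (vars H) < card (vars G)"
    from tight(5)[OF this] show "\<exists>w\<in>vars H. vdeg H w \<le> N (nat (surplus H))" by blast
  qed (use v fin in simp)
  moreover have "int (ld G y) \<le> surplus G" if "var_lit y = v" for y
    using tight(1-3) _ lean_surplus_pos by (rule ld_le_surplus_if_tight) (use that v(1) in simp_all)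
  ultimately show ?case using v(1) by fastforce
qed

theorem theorem9p10:
  fixes F :: "'v lit set multiset"
  assumes "multi_clause_set F" and "lean F" and "nvars F > 0"
  shows "minvdeg F \<le> enat (N (nat (surplus F)))
    \<and> (\<exists>v \<in> vars F. vdeg F v \<le> N (nat (surplus F))
          \<and> int (ld F (Pos v)) \<le> surplus F \<and> int (ld F (Neg v)) \<le> surplus F)"
proof -
  have vars_ne: "vars F \<noteq> {}" using assms(3) by (auto simp: nvars_def)
  obtain v where v: "v \<in> vars F" "vdeg F v \<le> N (nat (surplus F))"
    "int (ld F (Pos v)) \<le> surplus F" "int (ld F (Neg v)) \<le> surplus F"
    using lean_exists_low_degree_var[OF assms(1,2) vars_ne] by blast
  have "Min (vdeg F ` vars F) \<le> vdeg F v" using finite_vars[OF assms(1)] v(1) by simp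
  then have "minvdeg F \<le> enat (N (nat (surplus F)))" using vars_ne v(2) by (simp add: minvdeg_def)
  then show ?thesis using v by blast
qed

end
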